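(* In the algebra $\mathcal{B}_d$, for any nonnegative integers $a,b$ with $a+b=d+1$, $$f^a\binom{H_2}{b}=0=\binom{H_2}{b}e^a,\qquad e^a\binom{H_1}{b}=0=\binom{H_1}{b}f^a.$$ In particular $e^{d+1}=0=f^{d+1}$ in $\mathcal{B}_d$.
   Context: Fix an integer $d\ge 0$. $\mathcal{B}_d$ is the associative $\mathbb{Q}$-algebra with $1$ generated by $e,f,H_1,H_2$ subject to the relations $H_1H_2=H_2H_1$, $H_1e-eH_1=e$, $H_1f-fH_1=-f$, $H_2e-eH_2=-e$, $H_2f-fH_2=f$, $ef-fe=H_1-H_2$, $H_1+H_2=d$, and $H_1(H_1-1)\cdots(H_1-d)=0$. For an element $T$ and integer $m\ge 0$, $\binom{T}{m}=T(T-1)\cdots(T-m+1)/m!$. *)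

theory Defs
  imports Main
begin

definition is_Q_algebra :: "'a::ring_1 itself \<Rightarrow> bool" where
  "is_Q_algebra _ \<longleftrightarrow> (\<forall>n::nat. n > 0 \<longrightarrow> (\<exists>y::'a. of_nat n * y = 1 \<and> y * of_nat n = 1))"

definition nat_inv :: "nat \<Rightarrow> 'a::ring_1" where
  "nat_inv n = (THE y. of_nat n * y = 1 \<and> y * of_nat n = 1)"

fun ffact :: "'a::ring_1 \<Rightarrow> nat \<Rightarrow> 'a" where
  "ffact T 0 = 1"
| "ffact T (Suc m) = ffact T m * (T - of_nat m)"

definition binomT :: "'a::ring_1 \<Rightarrow> nat \<Rightarrow> 'a" where
  "binomT T m = nat_inv (fact m) * ffact T m"

definition B_rels :: "nat \<Rightarrow> 'a::ring_1 \<Rightarrow> 'a \<Rightarrow> 'a \<Rightarrow> 'a \<Rightarrow> bool" where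
  "B_rels d e f H1 H2 \<longleftrightarrow>
     H1 * H2 = H2 * H1 \<and>
     H1 * e - e * H1 = e \<and> H1 * f - f * H1 = - f \<and>
     H2 * e - e * H2 = - e \<and> H2 * f - f * H2 = f \<and>
     e * f - f * e = H1 - H2 \<and>
     H1 + H2 = of_nat d \<and>
     ffact H1 (Suc d) = 0"

end

theory Submission
  imports Defs
begin

text \<open>
  Only \<open>[H, x] = \<plusminus>x\<close> and \<open>ffact H (d + 1) = 0\<close> are used; the latter passes from
  \<open>H\<^sub>1\<close> to \<open>H\<^sub>2 = d - H\<^sub>1\<close> by reflecting the falling factorial. If \<open>[H, x] = x\<close>,
  induct on \<open>a\<close>: by the induction hypothesis \<open>W = x\<^sup>a\<^sup>+\<^sup>1 ffact H (d - a)\<close> satisfies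
  \<open>W H = (d - a) W\<close>. Moving \<open>0 = ffact H (d + 1)\<close> across \<open>x\<^sup>a\<^sup>+\<^sup>1\<close> turns it into
  \<open>ffact (H + a + 1) (d + 1)\<close>, which acts on \<open>W\<close> from the right as the scalar \<open>(d + 1)!\<close>;
  so \<open>(d + 1)! W = 0\<close>, and \<open>W = 0\<close> over \<open>\<rat>\<close>. The case \<open>[H, x] = -x\<close> is the mirror image.
\<close>

lemma ffact_intertwine:
  fixes T S y :: "'a::ring_1"
  assumes "T * y = y * S"
  shows "ffact T n * y = y * ffact S n"
proof (induction n)
  case 0
  show ?case by simp
next
  case (Suc n)
  have step: "(T - of_nat n) * y = y * (S - of_nat n)"
    using assms by (simp add: algebra_simps mult_of_nat_commute)
  have "ffact T (Suc n) * y = ffact T n * ((T - of_nat n) * y)"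
    by (simp add: mult.assoc)
  also have "\<dots> = (ffact T n * y) * (S - of_nat n)"
    by (simp add: step mult.assoc)
  also have "\<dots> = y * ffact S (Suc n)"
    by (simp add: Suc mult.assoc)
  finally show ?case .
qed

lemma ffact_commute:
  fixes T S :: "'a::ring_1"
  assumes "T * S = S * T"
  shows "ffact T m * ffact S n = ffact S n * ffact T m"
proof -
  have "T * ffact S n = ffact S n * T"
    using ffact_intertwine[of S T S n] assms by simp
  then show ?thesis
    by (rule ffact_intertwine)
qed

lemma ffact_Suc_left: "ffact (T :: 'a::ring_1) (Suc n) = T * ffact (T - 1) n"
proof (induction n)
  case 0
  show ?case by simp
next
  case (Suc n)
  then show ?case
    by (simp add: algebra_simps)
qed

lemma ffact_of_nat_self: "ffact (of_nat n :: 'a::ring_1) n = of_nat (fact n)"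
proof (induction n)
  case 0
  show ?case by simp
next
  case (Suc n)
  then show ?case
    by (simp only: ffact_Suc_left) (simp add: algebra_simps)
qed

lemma ffact_uminus: "ffact (- T :: 'a::ring_1) n = (- 1) ^ n * ffact (T + of_nat n - 1) n"
proof (induction n)
  case 0
  show ?case by simp
next
  case (Suc n)
  have "(T + of_nat n - 1) * (T + of_nat n) = (T + of_nat n) * (T + of_nat n - 1)"
    by (simp add: algebra_simps)
  then have comm: "ffact (T + of_nat n - 1) n * (T + of_nat n) = (T + of_nat n) * ffact (T + of_nat n - 1) n"
    by (rule ffact_intertwine)
  have "ffact (- T) (Suc n) = (- 1) ^ n * ffact (T + of_nat n - 1) n * (- (T + of_nat n))"
    by (simp add: Suc)
  also have "\<dots> = (- 1) ^ Suc n * ((T + of_nat n) * ffact (T + of_nat n - 1) n)"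
    by (simp add: mult.assoc comm del: minus_add_distrib)
  also have "\<dots> = (- 1) ^ Suc n * ffact (T + of_nat (Suc n) - 1) (Suc n)"
    by (simp only: ffact_Suc_left[of "T + of_nat n", symmetric]) simp
  finally show ?case .
qed

lemma ffact_of_nat_minus:
  "ffact (of_nat n - T :: 'a::ring_1) (Suc n) = (- 1) ^ Suc n * ffact T (Suc n)"
proof -
  have "of_nat n - T = - (T - of_nat n)" and "T - of_nat n + of_nat (Suc n) - 1 = T"
    by simp_all
  then show ?thesis
    by (simp only: ffact_uminus)
qed

lemma raising_power_shift:
  fixes H x :: "'a::ring_1"
  assumes "H * x - x * H = x"
  shows "H * x ^ k = x ^ k * (H + of_nat k)"
proof (induction k)
  case 0
  show ?case by simp
next
  case (Suc k)
  have Hx: "H * x = x * (H + 1)"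
    using assms by (simp add: algebra_simps)
  have "H * x ^ Suc k = (H * x ^ k) * x"
    by (simp add: power_commutes mult.assoc)
  also have "\<dots> = x ^ k * (H * x + of_nat k * x)"
    by (simp only: Suc) (simp add: algebra_simps mult_of_nat_commute)
  also have "\<dots> = x ^ Suc k * (H + of_nat (Suc k))"
    by (simp only: Hx) (simp add: algebra_simps power_Suc2 mult_of_nat_commute del: power_Suc)
  finally show ?case .
qed

lemma lowering_power_shift:
  fixes H x :: "'a::ring_1"
  assumes "H * x - x * H = - x"
  shows "x ^ k * H = (H + of_nat k) * x ^ k"
proof (induction k)
  case 0
  show ?case by simp
next
  case (Suc k)
  have xH: "x * H = (H + 1) * x"
    using assms by (simp add: algebra_simps)
  have "x ^ Suc k * H = x * (x ^ k * H)"
    by (simp add: mult.assoc)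
  also have "\<dots> = (x * H + of_nat k * x) * x ^ k"
    by (simp only: Suc) (simp add: algebra_simps mult_of_nat_commute)
  also have "\<dots> = (H + of_nat (Suc k)) * x ^ Suc k"
    by (simp only: xH) (simp add: algebra_simps)
  finally show ?case .
qed

lemma Q_algebra_of_nat_mult_cancel:
  fixes x :: "'a::ring_1"
  assumes "is_Q_algebra TYPE('a)" and "0 < n" and "of_nat n * x = 0"
  shows "x = 0"
proof -
  obtain y :: 'a where "y * of_nat n = 1"
    using assms(1,2) unfolding is_Q_algebra_def by blast
  then have "x = y * (of_nat n * x)"
    by (simp flip: mult.assoc)
  then show ?thesis
    using assms(3) by simp
qed

lemma nat_inv_commute:
  fixes z :: "'a::ring_1"
  assumes "is_Q_algebra TYPE('a)" and "0 < n"
  shows "nat_inv n * z = z * nat_inv n"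
proof -
  obtain y :: 'a where y: "of_nat n * y = 1" "y * of_nat n = 1"
    using assms unfolding is_Q_algebra_def by blast
  have "nat_inv n = y"
    unfolding nat_inv_def
  proof (rule the_equality)
    fix y' :: 'a
    assume y': "of_nat n * y' = 1 \<and> y' * of_nat n = 1"
    have "y' = y' * (of_nat n * y)"
      using y by simp
    also have "\<dots> = y"
      using y' by (simp flip: mult.assoc)
    finally show "y' = y" .
  qed (use y in simp)
  moreover have "y * z = y * (z * of_nat n) * y"
    using y by (simp add: mult.assoc)
  moreover have "z * y = y * (of_nat n * z) * y"
    using y by (simp flip: mult.assoc)
  ultimately show ?thesis
    by (simp add: mult_of_nat_commute)
qed

lemma raising_power_mult_ffact_eq_0:
  fixes H x :: "'a::ring_1"
  assumes Q: "is_Q_algebra TYPE('a)"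
    and raising: "H * x - x * H = x"
    and nil: "ffact H (Suc d) = 0"
  shows "a + b = Suc d \<Longrightarrow> x ^ a * ffact H b = 0"
proof (induction a arbitrary: b)
  case 0
  then show ?case using nil by simp
next
  case (Suc a)
  define W where "W = x ^ Suc a * ffact H b"
  have "W * (H - of_nat b) = x * (x ^ a * ffact H (Suc b))"
    by (simp add: W_def mult.assoc)
  also have "\<dots> = 0"
    using Suc.IH[of "Suc b"] Suc.prems by simp
  finally have "of_nat (b + Suc a) * W = W * (H + of_nat (Suc a))"
    by (simp add: algebra_simps mult_of_nat_commute)
  moreover have "b + Suc a = Suc d"
    using Suc.prems by simp
  ultimately have "ffact (of_nat (Suc d)) (Suc d) * W = W * ffact (H + of_nat (Suc a)) (Suc d)"
    by (metis ffact_intertwine)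
  then have "of_nat (fact (Suc d)) * W = W * ffact (H + of_nat (Suc a)) (Suc d)"
    by (simp only: ffact_of_nat_self)
  also have "\<dots> = x ^ Suc a * (ffact H b * ffact (H + of_nat (Suc a)) (Suc d))"
    by (simp add: W_def mult.assoc del: ffact.simps)
  also have "\<dots> = x ^ Suc a * (ffact (H + of_nat (Suc a)) (Suc d) * ffact H b)"
    by (subst ffact_commute) (simp_all add: algebra_simps mult_of_nat_commute)
  also have "\<dots> = ffact H (Suc d) * W"
    using ffact_intertwine[OF raising_power_shift[OF raising], of "Suc d" "Suc a"]
    by (metis W_def mult.assoc)
  finally have "of_nat (fact (Suc d)) * W = 0"
    using nil by simp
  then have "W = 0"
    by (rule Q_algebra_of_nat_mult_cancel[OF Q fact_gt_zero])
  then show ?case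
    by (simp add: W_def)
qed

lemma ffact_mult_lowering_power_eq_0:
  fixes H x :: "'a::ring_1"
  assumes Q: "is_Q_algebra TYPE('a)"
    and lowering: "H * x - x * H = - x"
    and nil: "ffact H (Suc d) = 0"
  shows "a + b = Suc d \<Longrightarrow> ffact H b * x ^ a = 0"
proof (induction a arbitrary: b)
  case 0
  then show ?case using nil by simp
next
  case (Suc a)
  define W where "W = ffact H b * x ^ Suc a"
  have "(H - of_nat b) * W = ((H - of_nat b) * ffact H b) * x ^ a * x"
    by (simp add: W_def power_commutes mult.assoc)
  also have "\<dots> = ffact H (Suc b) * x ^ a * x"
    using ffact_intertwine[of H "H - of_nat b" H b]
    by (simp add: algebra_simps mult_of_nat_commute)
  also have "\<dots> = 0"
    using Suc.IH[of "Suc b"] Suc.prems by simp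
  finally have "(H + of_nat (Suc a)) * W = W * of_nat (b + Suc a)"
    by (simp add: algebra_simps mult_of_nat_commute)
  moreover have "b + Suc a = Suc d"
    using Suc.prems by simp
  ultimately have "ffact (H + of_nat (Suc a)) (Suc d) * W = W * ffact (of_nat (Suc d)) (Suc d)"
    by (metis ffact_intertwine)
  then have "of_nat (fact (Suc d)) * W = ffact (H + of_nat (Suc a)) (Suc d) * W"
    by (simp only: ffact_of_nat_self mult_of_nat_commute)
  also have "\<dots> = (ffact (H + of_nat (Suc a)) (Suc d) * ffact H b) * x ^ Suc a"
    by (simp add: W_def mult.assoc del: ffact.simps)
  also have "\<dots> = (ffact H b * ffact (H + of_nat (Suc a)) (Suc d)) * x ^ Suc a"
    by (subst ffact_commute) (simp_all add: algebra_simps mult_of_nat_commute)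
  also have "\<dots> = W * ffact H (Suc d)"
    using ffact_intertwine[OF lowering_power_shift[OF lowering, symmetric], of "Suc a" "Suc d"]
    by (metis W_def mult.assoc)
  finally have "of_nat (fact (Suc d)) * W = 0"
    using nil by simp
  then have "W = 0"
    by (rule Q_algebra_of_nat_mult_cancel[OF Q fact_gt_zero])
  then show ?case
    by (simp add: W_def)
qed

lemma mult_binomT_eq_0:
  fixes x T :: "'a::ring_1"
  assumes "is_Q_algebra TYPE('a)" and "x * ffact T m = 0"
  shows "x * binomT T m = 0"
proof -
  have "x * binomT T m = nat_inv (fact m) * (x * ffact T m)"
    using nat_inv_commute[OF assms(1) fact_gt_zero, of m x]
    by (simp add: binomT_def flip: mult.assoc)
  then show ?thesis
    using assms(2) by simp
qed

lemma binomT_mult_eq_0: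
  fixes x T :: "'a::ring_1"
  shows "ffact T m * x = 0 \<Longrightarrow> binomT T m * x = 0"
  by (simp add: binomT_def mult.assoc)

theorem lemma4p3:
  fixes e f H1 H2 :: "'a::ring_1" and d a b :: nat
  assumes "is_Q_algebra TYPE('a)"
    and "B_rels d e f H1 H2"
    and "a + b = d + 1"
  shows "f ^ a * binomT H2 b = 0 \<and> binomT H2 b * e ^ a = 0 \<and>
         e ^ a * binomT H1 b = 0 \<and> binomT H1 b * f ^ a = 0 \<and>
         e ^ (d + 1) = 0 \<and> f ^ (d + 1) = 0"
proof -
  note Q = assms(1)
  have e_H1: "H1 * e - e * H1 = e" and f_H1: "H1 * f - f * H1 = - f"
    and e_H2: "H2 * e - e * H2 = - e" and f_H2: "H2 * f - f * H2 = f"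
    and nil1: "ffact H1 (Suc d) = 0" and "H1 + H2 = of_nat d"
    using assms(2) unfolding B_rels_def by auto
  then have "H2 = of_nat d - H1"
    by (simp add: algebra_simps)
  then have nil2: "ffact H2 (Suc d) = 0"
    using ffact_of_nat_minus[of d H1] nil1 by simp
  have ab: "a + b = Suc d"
    using assms(3) by simp
  have "f ^ a * ffact H2 b = 0" "e ^ a * ffact H1 b = 0"
    using raising_power_mult_ffact_eq_0[OF Q f_H2 nil2 ab]
      raising_power_mult_ffact_eq_0[OF Q e_H1 nil1 ab] by simp_all
  moreover have "ffact H2 b * e ^ a = 0" "ffact H1 b * f ^ a = 0"
    using ffact_mult_lowering_power_eq_0[OF Q e_H2 nil2 ab]
      ffact_mult_lowering_power_eq_0[OF Q f_H1 nil1 ab] by simp_all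
  moreover have "e ^ Suc d = 0" "f ^ Suc d = 0"
    using raising_power_mult_ffact_eq_0[OF Q e_H1 nil1, of "Suc d" 0]
      raising_power_mult_ffact_eq_0[OF Q f_H2 nil2, of "Suc d" 0] by simp_all
  ultimately show ?thesis
    by (simp add: mult_binomT_eq_0[OF Q] binomT_mult_eq_0)
qed

end
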